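(* Consider the two-player, three-item all-pay auction with budgets described in the context, with symmetric valuations $v_{1j}=v_{2j}=v_j$ for $j\in\{1,2,3\}$, where $v_1\ge v_2\ge v_3$. Suppose $B_i\ge\max\{\frac{v_1+v_2+v_3}{2},v_1\}$ for all $i\in\{1,2\}$. Let $z=\frac{v_1+v_2+v_3}{2}$. Case 1: $z>v_1$. Let $A=(v_1,0,z-v_1)$, $B=(z-v_2,v_2,0)$, $C=(0,z-v_3,v_3)$, let $L_{AB},L_{BC},L_{CA}$ be the line segments with the indicated endpoints and $|AB|,|BC|,|CA|$ their lengths. Let $K=\frac{z-v_3}{z-v_2}+1+\frac{z-v_3}{z-v_1}$ and $P_{AB}=\frac1K\cdot\frac{z-v_3}{z-v_2}$, $P_{BC}=\frac1K$, $P_{CA}=\frac1K\cdot\frac{z-v_3}{z-v_1}$. For each player $i\in\{1,2\}$ let $f_i(x_{i1},x_{i2},x_{i3})$ equal $\frac{P_{AB}}{|AB|}$ on $L_{AB}$, $\frac{P_{BC}}{|BC|}$ on $L_{BC}$, and $\frac{P_{CA}}{|CA|}$ on $L_{CA}$. Then $(f_1,f_2)$ forms a Nash equilibrium. Case 2: $z\le v_1$. Let $A=(v_1,0,0)$ and $B=(0,v_2,v_3)$, and for each $i\in\{1,2\}$ let $f_i(x_{i1},x_{i2},x_{i3})=\frac{1}{|AB|}$ be the uniform density on the segment $AB$ (of length $|AB|$). Then $(f_1,f_2)$ forms a Nash equilibrium.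
   Context: Multi-item all-pay auction with budgets. Two players $i\in\{1,2\}$ ($-i$ is the opponent of $i$) and $n$ items $j\in\{1,\dots,n\}$. Player $i$ has budget $B_i\ge0$ and values item $j$ at $v_{ij}>0$. A pure strategy of player $i$ is a vector $(x_{i1},\dots,x_{in})$ with all $x_{ij}\ge0$ and $\sum_j x_{ij}\le B_i$; a mixed strategy is a probability distribution over this set. On each item $j$ the higher bid wins the item. Tie-breaking on item $j$: if $x_{1j}=x_{2j}=\min\{B_1,B_2,v_{1j},v_{2j}\}$ and $\min\{B_i,v_{ij}\}>\min\{B_{-i},v_{-ij}\}$ for some $i$, then player $i$ wins item $j$; in all other ties each player wins item $j$ with probability $\frac12$. Player $i$'s utility on item $j$ is $v_{ij}-x_{ij}$ if he wins it and $-x_{ij}$ otherwise, and his total utility is the sum over items. A Nash equilibrium is a pair of mixed strategies in which each player's strategy maximizes his expected total utility against the other's, over all mixed strategies satisfying his budget constraint. Here $n=3$. Mixed strategies are specified by densities supported on finitely many line segments in $\mathbb{R}^3$; such a density is with respect to arc length (one-dimensional length measure) on the indicated segment, so the probability of a segment is the density times its length. *)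

theory Defs
  imports "HOL-Probability.Probability"
begin

type_synonym bid = "real ^ 3"

text \<open>Probability that player 1 wins an item, given budgets B1 B2, the two valuations
  w1 w2 of the item and the two bids a (player 1) and b (player 2), with the
  tie-breaking rule of the paper. Player 2 wins with the complementary probability.\<close>
definition win1 :: "real \<Rightarrow> real \<Rightarrow> real \<Rightarrow> real \<Rightarrow> real \<Rightarrow> real \<Rightarrow> real" where
  "win1 B1 B2 w1 w2 a b =
     (if a > b then 1
      else if a < b then 0
      else if a = min (min B1 B2) (min w1 w2) \<and> min B1 w1 > min B2 w2 then 1
      else if a = min (min B1 B2) (min w1 w2) \<and> min B2 w2 > min B1 w1 then 0
      else 1/2)"

definition util1 :: "real \<Rightarrow> real \<Rightarrow> bid \<Rightarrow> bid \<Rightarrow> bid \<Rightarrow> bid \<Rightarrow> real" where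
  "util1 B1 B2 v1 v2 x y =
     (\<Sum>j\<in>UNIV. v1$j * win1 B1 B2 (v1$j) (v2$j) (x$j) (y$j) - x$j)"

definition util2 :: "real \<Rightarrow> real \<Rightarrow> bid \<Rightarrow> bid \<Rightarrow> bid \<Rightarrow> bid \<Rightarrow> real" where
  "util2 B1 B2 v1 v2 x y =
     (\<Sum>j\<in>UNIV. v2$j * (1 - win1 B1 B2 (v1$j) (v2$j) (x$j) (y$j)) - y$j)"

definition feasible :: "real \<Rightarrow> bid set" where
  "feasible B = {x. (\<forall>j. 0 \<le> x$j) \<and> (\<Sum>j\<in>UNIV. x$j) \<le> B}"

definition mixed_strategy :: "real \<Rightarrow> bid measure \<Rightarrow> bool" where
  "mixed_strategy B M \<longleftrightarrow> prob_space M \<and> sets M = sets borel \<and> (AE x in M. x \<in> feasible B)"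

definition EU1 :: "real \<Rightarrow> real \<Rightarrow> bid \<Rightarrow> bid \<Rightarrow> bid measure \<Rightarrow> bid measure \<Rightarrow> real" where
  "EU1 B1 B2 v1 v2 M1 M2 = (\<integral>p. util1 B1 B2 v1 v2 (fst p) (snd p) \<partial>(M1 \<Otimes>\<^sub>M M2))"

definition EU2 :: "real \<Rightarrow> real \<Rightarrow> bid \<Rightarrow> bid \<Rightarrow> bid measure \<Rightarrow> bid measure \<Rightarrow> real" where
  "EU2 B1 B2 v1 v2 M1 M2 = (\<integral>p. util2 B1 B2 v1 v2 (fst p) (snd p) \<partial>(M1 \<Otimes>\<^sub>M M2))"

definition nash_eq :: "real \<Rightarrow> real \<Rightarrow> bid \<Rightarrow> bid \<Rightarrow> bid measure \<Rightarrow> bid measure \<Rightarrow> bool" where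
  "nash_eq B1 B2 v1 v2 M1 M2 \<longleftrightarrow>
     mixed_strategy B1 M1 \<and> mixed_strategy B2 M2 \<and>
     (\<forall>M. mixed_strategy B1 M \<longrightarrow> EU1 B1 B2 v1 v2 M M2 \<le> EU1 B1 B2 v1 v2 M1 M2) \<and>
     (\<forall>M. mixed_strategy B2 M \<longrightarrow> EU2 B1 B2 v1 v2 M1 M \<le> EU2 B1 B2 v1 v2 M1 M2)"

definition seg_unif :: "bid \<Rightarrow> bid \<Rightarrow> bid measure" where
  "seg_unif a b = distr (uniform_measure lborel {0..1::real}) borel (\<lambda>t. a + t *\<^sub>R (b - a))"

text \<open>The distribution with density (w.r.t. arc length) equal to the constant c on each listed
  segment [a,b]: a segment of length |b-a| with constant density c carries mass c*|b-a|,
  uniformly spread along it.\<close>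
definition seg_density_strategy :: "(real \<times> bid \<times> bid) list \<Rightarrow> bid measure" where
  "seg_density_strategy L = measure_of UNIV (sets borel)
     (\<lambda>S. \<Sum>(c, a, b)\<leftarrow>L. ennreal (c * norm (b - a)) * emeasure (seg_unif a b) S)"

end

theory Submission
  imports Defs
begin

(* With equal valuations and budgets at least every valuation, ties are settled by a fair coin.
   Against an opponent whose bid on item j is atomless and uniformly distributed on [0, v_j], a
   pure bid x therefore earns sum_j (v_j min(1, x_j / v_j) - x_j): this is at most 0 for every
   feasible x and equals 0 when x <= v. Hence a strategy with these marginals, supported in
   {x <= v} and within both budgets, is a symmetric equilibrium with value 0.
   Both strategies of the theorem are of this kind: their segments have endpoints in the convex
   set {x <= v, sum_j x_j <= max z v_1}, and on every item the segment masses combine uniform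
   laws on [0, s], [s, v_j] and [0, v_j] into the uniform law on [0, v_j]. *)

section \<open>Payoffs under equal valuations\<close>

definition fair_win :: "real \<Rightarrow> real \<Rightarrow> real" where
  "fair_win a b = (if a > b then 1 else if a < b then 0 else 1/2)"

definition allpay_utility :: "bid \<Rightarrow> bid \<Rightarrow> bid \<Rightarrow> real" where
  "allpay_utility w x y = (\<Sum>j\<in>UNIV. w$j * fair_win (x$j) (y$j) - x$j)"

lemma win1_same_valuation:
  assumes "w \<le> B1" "w \<le> B2"
  shows "win1 B1 B2 w w a b = fair_win a b"
  using assms by (auto simp: win1_def fair_win_def min_def)

lemma util_same_valuations:
  assumes "\<forall>j. w$j \<le> B1 \<and> w$j \<le> B2"
  shows "util1 B1 B2 w w x y = allpay_utility w x y"
    and "util2 B1 B2 w w x y = allpay_utility w y x"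
  using assms by (auto simp: util1_def util2_def allpay_utility_def win1_same_valuation fair_win_def
      intro!: sum.cong)

declare borel_measurable_nth [measurable]

lemma allpay_utility_measurable [measurable]:
  "(\<lambda>p. allpay_utility w (fst p) (snd p)) \<in> borel_measurable (borel \<Otimes>\<^sub>M borel)"
  unfolding allpay_utility_def fair_win_def by measurable

lemma feasible_nth_bounds:
  assumes "x \<in> feasible B"
  shows "0 \<le> x$j" "x$j \<le> B"
proof -
  have "x$j \<le> (\<Sum>i\<in>UNIV. x$i)"
    using assms by (intro member_le_sum) (auto simp: feasible_def)
  then show "0 \<le> x$j" "x$j \<le> B"
    using assms by (auto simp: feasible_def)
qed

lemma feasible_mono: "B \<le> B' \<Longrightarrow> feasible B \<subseteq> feasible B'"
  by (auto simp: feasible_def)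

lemma feasible_borel [measurable]: "feasible B \<in> sets borel"
  unfolding feasible_def by measurable

lemma convex_feasible: "convex (feasible B)"
  unfolding convex_def feasible_def
  by (auto simp: sum.distrib sum_distrib_left[symmetric] intro!: convex_bound_le)

lemma abs_allpay_utility_le:
  assumes "x \<in> feasible B"
  shows "\<bar>allpay_utility w x y\<bar> \<le> (\<Sum>j\<in>UNIV. \<bar>w$j\<bar> + B)"
  unfolding allpay_utility_def
proof (rule order_trans[OF sum_abs sum_mono])
  fix j
  have "\<bar>w$j * fair_win (x$j) (y$j)\<bar> \<le> \<bar>w$j\<bar>"
    by (simp add: fair_win_def abs_mult)
  then show "\<bar>w$j * fair_win (x$j) (y$j) - x$j\<bar> \<le> \<bar>w$j\<bar> + B"
    using feasible_nth_bounds[OF assms, of j] by linarith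
qed

section \<open>Opponents with uniform marginals\<close>

definition uniform_cdf :: "real \<Rightarrow> real \<Rightarrow> real \<Rightarrow> real" where
  "uniform_cdf lo hi c = max 0 (min 1 ((c - lo) / (hi - lo)))"

lemma uniform_cdf_split:
  assumes "0 < s" "s < V" "mf + ml + mh = 1" "ml * (V - s) = mh * s"
  shows "mf * uniform_cdf 0 V c + ml * uniform_cdf 0 s c + mh * uniform_cdf s V c = uniform_cdf 0 V c"
proof -
  \<comment> \<open>The two short pieces carry the same density \<open>r\<close>, so together they are uniform on \<open>[0, V]\<close>.\<close>
  define r where "r = ml / s"
  have ml: "ml = r * s" and mh: "mh = r * (V - s)"
    using assms by (auto simp: r_def field_simps)
  have mf: "mf = 1 - r * V"
    using assms(3) by (simp add: ml mh algebra_simps)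
  consider "c \<le> 0" | "0 < c" "c \<le> s" | "s < c" "c \<le> V" | "V < c"
    by linarith
  then show ?thesis
  proof cases
    case 1
    then show ?thesis using assms by (simp add: uniform_cdf_def divide_nonpos_pos)
  next
    case 2
    then show ?thesis using assms by (simp add: uniform_cdf_def ml mh mf field_simps)
  next
    case 3
    then show ?thesis using assms by (simp add: uniform_cdf_def ml mh mf field_simps)
  next
    case 4
    then show ?thesis using assms by (simp add: uniform_cdf_def)
  qed
qed

definition uniform_payoff :: "bid \<Rightarrow> bid \<Rightarrow> real" where
  "uniform_payoff w x = (\<Sum>j\<in>UNIV. w$j * uniform_cdf 0 (w$j) (x$j) - x$j)"

lemma uniform_payoff_measurable [measurable]: "uniform_payoff w \<in> borel_measurable borel"
  unfolding uniform_payoff_def uniform_cdf_def by measurable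

lemma uniform_payoff_nonpos:
  assumes "\<forall>j. 0 < w$j" "\<forall>j. 0 \<le> x$j"
  shows "uniform_payoff w x \<le> 0"
  unfolding uniform_payoff_def
proof (rule sum_nonpos)
  fix j
  have "0 < w$j" "0 \<le> x$j"
    using assms by auto
  then have "w$j * uniform_cdf 0 (w$j) (x$j) \<le> w$j * (x$j / w$j)"
    by (intro mult_left_mono) (auto simp: uniform_cdf_def)
  then show "w$j * uniform_cdf 0 (w$j) (x$j) - x$j \<le> 0"
    using \<open>0 < w$j\<close> by simp
qed

lemma uniform_payoff_eq_0:
  assumes "\<forall>j. 0 < w$j" "\<forall>j. 0 \<le> x$j" "x \<le> w"
  shows "uniform_payoff w x = 0"
  unfolding uniform_payoff_def
proof (rule sum.neutral, intro ballI)
  fix j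
  have "0 \<le> x$j" "x$j \<le> w$j" "0 < w$j"
    using assms by (auto simp: less_eq_vec_def)
  then show "w$j * uniform_cdf 0 (w$j) (x$j) - x$j = 0"
    by (simp add: uniform_cdf_def)
qed

definition uniform_marginals :: "bid \<Rightarrow> bid measure \<Rightarrow> bool" where
  "uniform_marginals w M \<longleftrightarrow>
     (\<forall>j c. measure M {y. y$j < c} = uniform_cdf 0 (w$j) c \<and> measure M {y. y$j = c} = 0)"

lemma (in prob_space) expectation_fair_win:
  assumes [measurable]: "X \<in> borel_measurable M"
  shows "expectation (\<lambda>y. fair_win a (X y)) = \<P>(y in M. X y < a) + \<P>(y in M. X y = a) / 2"
proof -
  have "expectation (\<lambda>y. fair_win a (X y)) =
      expectation (\<lambda>y. indicator {y \<in> space M. X y < a} y + indicator {y \<in> space M. X y = a} y / 2)"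
    by (intro Bochner_Integration.integral_cong) (auto simp: fair_win_def indicator_def)
  also have "\<dots> = \<P>(y in M. X y < a) + \<P>(y in M. X y = a) / 2"
    by (subst Bochner_Integration.integral_add)
      (auto intro!: integrable_real_indicator integrable_divide_zero simp: less_top[symmetric])
  finally show ?thesis .
qed

lemma integral_allpay_utility_uniform_marginals:
  assumes "prob_space M" and sets_M: "sets M = sets borel" and "uniform_marginals w M"
  shows "(\<integral>y. allpay_utility w x y \<partial>M) = uniform_payoff w x"
proof -
  interpret prob_space M by fact
  note sets_M [measurable_cong]
  have space_M: "space M = UNIV"
    using sets_eq_imp_space_eq[OF sets_M] by simp
  have win: "expectation (\<lambda>y. fair_win (x$j) (y$j)) = uniform_cdf 0 (w$j) (x$j)" for j
    using assms(3) by (simp add: expectation_fair_win space_M uniform_marginals_def)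
  have "integrable M (\<lambda>y. fair_win (x$j) (y$j))" for j
    by (rule integrable_const_bound[where B=1]) (auto simp: fair_win_def)
  then show ?thesis
    by (simp add: allpay_utility_def uniform_payoff_def win prob_space)
qed

lemma integral_pair_allpay_utility_uniform_marginals:
  assumes M: "mixed_strategy B M" and "prob_space N" and sets_N: "sets N = sets borel"
    and marg: "uniform_marginals w N"
  shows "(\<integral>p. allpay_utility w (fst p) (snd p) \<partial>(M \<Otimes>\<^sub>M N)) = (\<integral>x. uniform_payoff w x \<partial>M)"
proof -
  have "prob_space M" and sets_M: "sets M = sets borel" and feas: "AE x in M. x \<in> feasible B"
    using M by (auto simp: mixed_strategy_def)
  interpret P: pair_prob_space M N
    by (simp add: pair_prob_space_def pair_sigma_finite_def prob_space_imp_sigma_finite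
        \<open>prob_space M\<close> \<open>prob_space N\<close>)
  note [measurable_cong] = sets_pair_measure_cong[OF sets_M sets_N] sets_M sets_N
  have "AE p in M \<Otimes>\<^sub>M N. fst p \<in> feasible B"
    using feas by (intro P.AE_pair_measure) (auto simp: feasible_def elim: AE_mp)
  then have integrable: "integrable (M \<Otimes>\<^sub>M N) (\<lambda>p. allpay_utility w (fst p) (snd p))"
    by (intro P.integrable_const_bound[where B="\<Sum>j\<in>UNIV. \<bar>w$j\<bar> + B"])
      (auto elim!: eventually_mono simp: abs_allpay_utility_le)
  have "(\<integral>p. allpay_utility w (fst p) (snd p) \<partial>(M \<Otimes>\<^sub>M N)) =
      (\<integral>x. (\<integral>y. allpay_utility w x y \<partial>N) \<partial>M)"
    using P.integral_fst'[OF integrable] by simp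
  also have "\<dots> = (\<integral>x. uniform_payoff w x \<partial>M)"
    by (simp add: integral_allpay_utility_uniform_marginals[OF \<open>prob_space N\<close> sets_N marg])
  finally show ?thesis .
qed

lemma EU1_same_valuations:
  assumes "\<forall>j. w$j \<le> B1 \<and> w$j \<le> B2"
  shows "EU1 B1 B2 w w M N = (\<integral>p. allpay_utility w (fst p) (snd p) \<partial>(M \<Otimes>\<^sub>M N))"
  by (simp add: EU1_def util_same_valuations[OF assms])

lemma EU2_same_valuations:
  assumes "\<forall>j. w$j \<le> B1 \<and> w$j \<le> B2" and M: "mixed_strategy B1 M" and N: "mixed_strategy B2 N"
  shows "EU2 B1 B2 w w M N = (\<integral>p. allpay_utility w (fst p) (snd p) \<partial>(N \<Otimes>\<^sub>M M))"
proof -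
  have "prob_space M" "prob_space N"
    and sets_M: "sets M = sets borel" and sets_N: "sets N = sets borel"
    using M N by (auto simp: mixed_strategy_def)
  interpret P: pair_prob_space N M
    by (simp add: pair_prob_space_def pair_sigma_finite_def prob_space_imp_sigma_finite
        \<open>prob_space M\<close> \<open>prob_space N\<close>)
  note [measurable_cong] = sets_pair_measure_cong[OF sets_N sets_M]
  show ?thesis
    using P.integral_product_swap[of "\<lambda>p. allpay_utility w (fst p) (snd p)"]
    by (simp add: EU2_def util_same_valuations[OF assms(1)] case_prod_beta')
qed

lemma nash_eq_of_uniform_marginals:
  assumes f1: "mixed_strategy B1 f" and f2: "mixed_strategy B2 f"
    and marg: "uniform_marginals w f" and w_pos: "\<forall>j. 0 < w$j"
    and w_budget: "\<forall>j. w$j \<le> B1 \<and> w$j \<le> B2" and below: "AE y in f. y \<le> w"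
  shows "nash_eq B1 B2 w w f f"
proof -
  have "prob_space f" and sets_f: "sets f = sets borel"
    using f1 by (auto simp: mixed_strategy_def)
  note pair_integral = integral_pair_allpay_utility_uniform_marginals[OF _ this marg]
  have deviation: "(\<integral>p. allpay_utility w (fst p) (snd p) \<partial>(M \<Otimes>\<^sub>M f)) \<le> 0"
    if M: "mixed_strategy B M" for M B
  proof -
    have "AE x in M. x \<in> feasible B"
      using M by (simp add: mixed_strategy_def)
    then have "0 \<le> (\<integral>x. - uniform_payoff w x \<partial>M)"
      by (intro integral_nonneg_AE)
        (auto elim!: eventually_mono intro!: uniform_payoff_nonpos w_pos feasible_nth_bounds)
    then show ?thesis
      by (simp add: pair_integral[OF M])
  qed
  have equilibrium: "(\<integral>p. allpay_utility w (fst p) (snd p) \<partial>(f \<Otimes>\<^sub>M f)) = 0"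
  proof -
    have "AE x in f. x \<in> feasible B1"
      using f1 by (simp add: mixed_strategy_def)
    with below have "AE x in f. uniform_payoff w x = 0"
      by eventually_elim (auto intro!: uniform_payoff_eq_0 w_pos feasible_nth_bounds)
    then have "(\<integral>x. uniform_payoff w x \<partial>f) = (\<integral>x. 0 \<partial>f)"
      by (intro integral_cong_AE) (simp_all add: measurable_cong_sets[OF sets_f refl])
    then show ?thesis
      by (simp add: pair_integral[OF f1])
  qed
  show ?thesis
    unfolding nash_eq_def
    using f1 f2 deviation equilibrium
    by (simp add: EU1_same_valuations[OF w_budget] EU2_same_valuations[OF w_budget])
qed

section \<open>Uniform distributions on segments\<close>

lemma measure_Icc01_Int_lessThan:
  "measure lborel ({0..1} \<inter> {..<r}) = max 0 (min 1 (r::real))"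
proof -
  consider "r \<le> 0" | "0 < r" "r \<le> 1" | "1 < r"
    by linarith
  then show ?thesis
  proof cases
    case 1
    then have "{0..1} \<inter> {..<r} = {}" by auto
    then show ?thesis using 1 by simp
  next
    case 2
    then have "{0..1} \<inter> {..<r} = {0..<r}" by auto
    then show ?thesis using 2 by simp
  next
    case 3
    then have "{0..1} \<inter> {..<r} = {0..1}" by auto
    then show ?thesis using 3 by simp
  qed
qed

lemma measure_Icc01_Int_greaterThan:
  "measure lborel ({0..1} \<inter> {r<..}) = max 0 (min 1 (1 - r::real))"
proof -
  consider "r < 0" | "0 \<le> r" "r < 1" | "1 \<le> r"
    by linarith
  then show ?thesis
  proof cases
    case 1
    then have "{0..1} \<inter> {r<..} = {0..1}" by auto
    then show ?thesis using 1 by simp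
  next
    case 2
    then have "{0..1} \<inter> {r<..} = {r<..1}" by auto
    then show ?thesis using 2 by simp
  next
    case 3
    then have "{0..1} \<inter> {r<..} = {}" by auto
    then show ?thesis using 3 by simp
  qed
qed

lemma measure_Icc01_affine_less:
  fixes p q c :: real
  assumes "p \<noteq> q"
  shows "measure lborel ({0..1} \<inter> {t. p + t * (q - p) < c}) = uniform_cdf (min p q) (max p q) c"
proof (cases "p < q")
  case True
  then have "{t. p + t * (q - p) < c} = {..<(c - p) / (q - p)}"
    by (auto simp: field_simps)
  then show ?thesis
    using True by (simp add: measure_Icc01_Int_lessThan uniform_cdf_def)
next
  case False
  with assms have "q < p" by simp
  then have "{t. p + t * (q - p) < c} = {(p - c) / (p - q)<..}"
    and "1 - (p - c) / (p - q) = (c - q) / (p - q)"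
    by (auto simp: field_simps)
  then show ?thesis
    using \<open>q < p\<close> by (simp add: measure_Icc01_Int_greaterThan uniform_cdf_def)
qed

lemma measure_Icc01_affine_eq:
  fixes p q c :: real
  assumes "p \<noteq> q"
  shows "measure lborel ({0..1} \<inter> {t. p + t * (q - p) = c}) = 0"
proof -
  have "{t. p + t * (q - p) = c} = {(c - p) / (q - p)}"
    using assms by (auto simp: field_simps)
  then show ?thesis
    by (simp add: measure_def emeasure_lborel_countable)
qed

lemma prob_space_seg_unif: "prob_space (seg_unif a b)"
  unfolding seg_unif_def
  by (intro prob_space.prob_space_distr prob_space_uniform_measure) auto

lemma sets_seg_unif [simp]: "sets (seg_unif a b) = sets borel"
  by (simp add: seg_unif_def)

lemma space_seg_unif [simp]: "space (seg_unif a b) = UNIV"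
  using sets_eq_imp_space_eq[OF sets_seg_unif] by simp

lemma measure_seg_unif:
  assumes "S \<in> sets borel"
  shows "measure (seg_unif a b) S = measure lborel ({0..1} \<inter> {t. a + t *\<^sub>R (b - a) \<in> S})"
proof -
  have [measurable]: "S \<in> sets borel" by fact
  show ?thesis
    unfolding seg_unif_def
    by (subst measure_distr) (auto simp: measure_uniform_measure vimage_def Int_commute)
qed

lemma measure_seg_unif_nth_less:
  assumes "a$j \<noteq> b$j"
  shows "measure (seg_unif a b) {y. y$j < c} = uniform_cdf (min (a$j) (b$j)) (max (a$j) (b$j)) c"
  using measure_Icc01_affine_less[OF assms] by (simp add: measure_seg_unif)

lemma measure_seg_unif_nth_eq:
  assumes "a$j \<noteq> b$j"
  shows "measure (seg_unif a b) {y. y$j = c} = 0"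
  using measure_Icc01_affine_eq[OF assms] by (simp add: measure_seg_unif)

lemma AE_seg_unif_closed_segment: "AE y in seg_unif a b. y \<in> closed_segment a b"
  unfolding seg_unif_def
proof (subst AE_distr_iff)
  have "a + t *\<^sub>R (b - a) \<in> closed_segment a b" if "t \<in> {0..1}" for t
  proof -
    have "a + t *\<^sub>R (b - a) = (1 - t) *\<^sub>R a + t *\<^sub>R b"
      by (simp add: algebra_simps)
    then show ?thesis
      using that by (auto simp: closed_segment_def)
  qed
  then show "AE t in uniform_measure lborel {0..1}. a + t *\<^sub>R (b - a) \<in> closed_segment a b"
    by (intro AE_uniform_measureI AE_I2) auto
qed auto

lemma sets_seg_density_strategy [simp]: "sets (seg_density_strategy L) = sets borel"
  unfolding seg_density_strategy_def
  using sets.sigma_sets_eq[of borel] by (subst sets_measure_of) auto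

lemma space_seg_density_strategy [simp]: "space (seg_density_strategy L) = UNIV"
  unfolding seg_density_strategy_def by (subst space_measure_of) auto

lemma countably_additive_seg_masses:
  "countably_additive (sets borel)
     (\<lambda>S. \<Sum>(c, a, b)\<leftarrow>L. ennreal (c * norm (b - a)) * emeasure (seg_unif a b) S)"
proof (induction L)
  case Nil
  then show ?case by (simp add: countably_additive_def)
next
  case (Cons s L)
  obtain c a b where s: "s = (c, a, b)" by (cases s)
  show ?case unfolding countably_additive_def
  proof (intro allI impI)
    fix A :: "nat \<Rightarrow> bid set"
    assume A: "range A \<subseteq> sets borel" "disjoint_family A" "\<Union> (range A) \<in> sets borel"
    have "(\<Sum>i. ennreal (c * norm (b - a)) * emeasure (seg_unif a b) (A i)) =
        ennreal (c * norm (b - a)) * emeasure (seg_unif a b) (\<Union>i. A i)"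
      using A by (simp add: suminf_emeasure)
    moreover have "(\<Sum>i. \<Sum>(c, a, b)\<leftarrow>L. ennreal (c * norm (b - a)) * emeasure (seg_unif a b) (A i)) =
        (\<Sum>(c, a, b)\<leftarrow>L. ennreal (c * norm (b - a)) * emeasure (seg_unif a b) (\<Union>i. A i))"
      using Cons.IH A unfolding countably_additive_def by blast
    ultimately show "(\<Sum>i. \<Sum>(c, a, b)\<leftarrow>s # L. ennreal (c * norm (b - a)) * emeasure (seg_unif a b) (A i)) =
        (\<Sum>(c, a, b)\<leftarrow>s # L. ennreal (c * norm (b - a)) * emeasure (seg_unif a b) (\<Union> (range A)))"
      by (simp add: s suminf_add[symmetric])
  qed
qed

lemma emeasure_seg_density_strategy:
  assumes "S \<in> sets borel"
  shows "emeasure (seg_density_strategy L) S =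
    (\<Sum>(c, a, b)\<leftarrow>L. ennreal (c * norm (b - a)) * emeasure (seg_unif a b) S)"
  unfolding seg_density_strategy_def
proof (rule emeasure_measure_of_sigma)
  show "sigma_algebra UNIV (sets borel)"
    using sets.sigma_algebra_axioms[of borel] by simp
  show "positive (sets borel) (\<lambda>S. \<Sum>(c, a, b)\<leftarrow>L. ennreal (c * norm (b - a)) * emeasure (seg_unif a b) S)"
    unfolding positive_def by (induction L) auto
qed (fact countably_additive_seg_masses, fact assms)

lemma emeasure_seg_density_strategy_ennreal:
  assumes nonneg: "\<forall>(c, a, b)\<in>set L. 0 \<le> c" and "S \<in> sets borel"
  shows "emeasure (seg_density_strategy L) S =
    ennreal (\<Sum>(c, a, b)\<leftarrow>L. c * norm (b - a) * measure (seg_unif a b) S)"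
  unfolding emeasure_seg_density_strategy[OF assms(2)]
  using nonneg
proof (induction L)
  case (Cons s L)
  obtain c a b where s: "s = (c, a, b)" by (cases s)
  interpret prob_space "seg_unif a b"
    by (rule prob_space_seg_unif)
  have "0 \<le> (\<Sum>(c, a, b)\<leftarrow>L. c * norm (b - a) * measure (seg_unif a b) S)"
    using Cons.prems by (intro sum_list_nonneg) auto
  then show ?case
    using Cons by (simp add: s emeasure_eq_measure ennreal_mult ennreal_plus[symmetric])
qed simp

lemma measure_seg_density_strategy:
  assumes nonneg: "\<forall>(c, a, b)\<in>set L. 0 \<le> c" and "S \<in> sets borel"
  shows "measure (seg_density_strategy L) S =
    (\<Sum>(c, a, b)\<leftarrow>L. c * norm (b - a) * measure (seg_unif a b) S)"
proof -
  have "0 \<le> (\<Sum>(c, a, b)\<leftarrow>L. c * norm (b - a) * measure (seg_unif a b) S)"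
    using nonneg by (intro sum_list_nonneg) auto
  then show ?thesis
    by (simp add: measure_def emeasure_seg_density_strategy_ennreal[OF assms])
qed

lemma prob_space_seg_density_strategy:
  assumes nonneg: "\<forall>(c, a, b)\<in>set L. 0 \<le> c" and total: "(\<Sum>(c, a, b)\<leftarrow>L. c * norm (b - a)) = 1"
  shows "prob_space (seg_density_strategy L)"
proof (rule prob_spaceI)
  show "emeasure (seg_density_strategy L) (space (seg_density_strategy L)) = 1"
    using prob_space.prob_space[OF prob_space_seg_unif] total
    by (simp add: emeasure_seg_density_strategy_ennreal[OF nonneg] split_def)
qed

lemma AE_seg_density_strategy_convex:
  assumes "S \<in> sets borel" "convex S" and ends: "\<forall>(c, a, b)\<in>set L. a \<in> S \<and> b \<in> S"
  shows "AE y in seg_density_strategy L. y \<in> S"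
proof (rule AE_I')
  have null: "emeasure (seg_unif a b) (- S) = 0" if "a \<in> S" "b \<in> S" for a b
  proof -
    have "AE y in seg_unif a b. y \<in> S"
      using AE_seg_unif_closed_segment[of a b]
      by (rule eventually_mono) (use closed_segment_subset[OF that \<open>convex S\<close>] in auto)
    then show ?thesis
      using AE_iff_measurable[of "- S" "seg_unif a b" "\<lambda>y. y \<in> S"] assms(1)
      by (auto simp: Compl_eq_Diff_UNIV)
  qed
  have "emeasure (seg_density_strategy L) (- S) = 0"
    unfolding emeasure_seg_density_strategy[OF borel_comp[OF assms(1)]]
    using ends by (induction L) (auto simp: null)
  then show "- S \<in> null_sets (seg_density_strategy L)"
    using assms(1) by (auto simp: null_sets_def)
qed auto

lemma uniform_marginals_seg_density_strategy:
  assumes nonneg: "\<forall>(c, a, b)\<in>set L. 0 \<le> c"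
    and nondegenerate: "\<forall>(c, a, b)\<in>set L. \<forall>j. a$j \<noteq> b$j"
    and cdf: "\<And>j c. (\<Sum>(d, a, b)\<leftarrow>L. d * norm (b - a) *
        uniform_cdf (min (a$j) (b$j)) (max (a$j) (b$j)) c) = uniform_cdf 0 (w$j) c"
  shows "uniform_marginals w (seg_density_strategy L)"
  unfolding uniform_marginals_def
proof (intro allI conjI)
  fix j c
  show "measure (seg_density_strategy L) {y. y$j < c} = uniform_cdf 0 (w$j) c"
    unfolding cdf[symmetric] using nondegenerate
    by (subst measure_seg_density_strategy[OF nonneg])
      (auto intro!: arg_cong[where f=sum_list] map_cong simp: measure_seg_unif_nth_less)
  have "{y::bid. y$j = c} \<in> sets borel"
    by measurable
  moreover have "(\<Sum>(d, a, b)\<leftarrow>L. d * norm (b - a) * measure (seg_unif a b) {y. y$j = c}) = 0"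
    using nondegenerate by (induction L) (auto simp: measure_seg_unif_nth_eq)
  ultimately show "measure (seg_density_strategy L) {y. y$j = c} = 0"
    by (simp add: measure_seg_density_strategy[OF nonneg])
qed

lemma nash_eq_seg_density_strategy:
  assumes nonneg: "\<forall>(c, a, b)\<in>set L. 0 \<le> c"
    and total: "(\<Sum>(c, a, b)\<leftarrow>L. c * norm (b - a)) = 1"
    and marg: "uniform_marginals w (seg_density_strategy L)"
    and ends: "\<forall>(c, a, b)\<in>set L. a \<in> feasible m \<inter> {..w} \<and> b \<in> feasible m \<inter> {..w}"
    and w_pos: "\<forall>j. 0 < w$j" and w_budget: "\<forall>j. w$j \<le> B1 \<and> w$j \<le> B2"
    and "m \<le> B1" "m \<le> B2"
  shows "nash_eq B1 B2 w w (seg_density_strategy L) (seg_density_strategy L)"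
proof (rule nash_eq_of_uniform_marginals[OF _ _ marg w_pos w_budget])
  have support: "AE y in seg_density_strategy L. y \<in> feasible m \<inter> {..w}"
    using ends
    by (intro AE_seg_density_strategy_convex convex_Int convex_feasible) (auto simp: is_interval_convex)
  have "mixed_strategy B (seg_density_strategy L)" if "m \<le> B" for B
    unfolding mixed_strategy_def
    using prob_space_seg_density_strategy[OF nonneg total] feasible_mono[OF that] support
    by (auto elim!: eventually_mono)
  then show "mixed_strategy B1 (seg_density_strategy L)" "mixed_strategy B2 (seg_density_strategy L)"
    using assms by auto
  show "AE y in seg_density_strategy L. y \<le> w"
    using support by (rule eventually_mono) simp
qed

lemma nash_eq_segment_strategy:
  fixes v1 v2 v3 B1 B2 :: real and A B :: bid
  assumes "0 < v2" "0 < v3" "v2 + v3 \<le> v1" "v1 \<le> B1" "v1 \<le> B2"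
    and A_def: "A = vector [v1, 0, 0]" and B_def: "B = vector [0, v2, v3]"
    and L_def: "L = [(1 / norm (B - A), A, B)]"
  shows "nash_eq B1 B2 (vector [v1, v2, v3]) (vector [v1, v2, v3])
    (seg_density_strategy L) (seg_density_strategy L)"
proof (rule nash_eq_seg_density_strategy[where m = v1])
  let ?w = "vector [v1, v2, v3] :: bid"
  have A: "A$1 = v1" "A$2 = 0" "A$3 = 0" and B: "B$1 = 0" "B$2 = v2" "B$3 = v3"
    by (simp_all add: A_def B_def)
  have "A \<noteq> B"
    using A(2) B(2) \<open>0 < v2\<close> by auto
  then show "(\<Sum>(c, a, b)\<leftarrow>L. c * norm (b - a)) = 1"
    by (simp add: L_def)
  have "(\<Sum>(d, a, b)\<leftarrow>L. d * norm (b - a) *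
      uniform_cdf (min (a$j) (b$j)) (max (a$j) (b$j)) c) = uniform_cdf 0 (?w$j) c" for j c
    using exhaust_3[of j] \<open>A \<noteq> B\<close> assms(1-3)
    by (elim disjE) (simp_all add: L_def A B)
  then show "uniform_marginals ?w (seg_density_strategy L)"
    using assms(1-3)
    by (intro uniform_marginals_seg_density_strategy) (simp_all add: L_def A B forall_3)
  show "\<forall>(c, a, b)\<in>set L. a \<in> feasible v1 \<inter> {..?w} \<and> b \<in> feasible v1 \<inter> {..?w}"
    using assms(1-3) by (simp add: L_def A B feasible_def less_eq_vec_def forall_3 sum_3)
qed (use assms in \<open>auto simp: L_def forall_3\<close>)

lemma triangle_masses:
  fixes d1 d2 d3 K :: real
  assumes "0 < d1" "0 < d2" "0 < d3" and K: "K = d3 / d2 + 1 + d3 / d1"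
  obtains r where "0 \<le> r"
    and "(1 / K) * (d3 / d2) = r / d2" "1 / K = r / d3" "(1 / K) * (d3 / d1) = r / d1"
    and "(1 / K) * (d3 / d2) + 1 / K + (1 / K) * (d3 / d1) = 1"
proof
  have "0 < K"
    using assms by (simp add: add_pos_pos)
  then show "0 \<le> d3 / K" "1 / K = d3 / K / d3"
    using assms by simp_all
  have "(1 / K) * (d3 / d2) + 1 / K + (1 / K) * (d3 / d1) = (1 / K) * (d3 / d2 + 1 + d3 / d1)"
    by (simp only: distrib_left mult_1_right)
  also have "\<dots> = 1"
    using \<open>0 < K\<close> K by simp
  finally show "(1 / K) * (d3 / d2) + 1 / K + (1 / K) * (d3 / d1) = 1" .
qed simp_all

lemma nash_eq_triangle_strategy:
  fixes v1 v2 v3 z K PAB PBC PCA B1 B2 :: real and A B C :: bid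
  assumes z: "z = (v1 + v2 + v3) / 2" and "v1 < z" "v2 < z" "v3 < z" and "z \<le> B1" "z \<le> B2"
    and A_def: "A = vector [v1, 0, z - v1]" and B_def: "B = vector [z - v2, v2, 0]"
    and C_def: "C = vector [0, z - v3, v3]"
    and K_def: "K = (z - v3) / (z - v2) + 1 + (z - v3) / (z - v1)"
    and PAB_def: "PAB = (1 / K) * ((z - v3) / (z - v2))" and PBC_def: "PBC = 1 / K"
    and PCA_def: "PCA = (1 / K) * ((z - v3) / (z - v1))"
    and L_def: "L = [(PAB / norm (B - A), A, B), (PBC / norm (C - B), B, C), (PCA / norm (A - C), C, A)]"
  shows "nash_eq B1 B2 (vector [v1, v2, v3]) (vector [v1, v2, v3])
    (seg_density_strategy L) (seg_density_strategy L)"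
proof (rule nash_eq_seg_density_strategy[where m = z])
  let ?w = "vector [v1, v2, v3] :: bid"
  have A: "A$1 = v1" "A$2 = 0" "A$3 = z - v1" and B: "B$1 = z - v2" "B$2 = v2" "B$3 = 0"
    and C: "C$1 = 0" "C$2 = z - v3" "C$3 = v3"
    by (simp_all add: A_def B_def C_def)
  have gaps: "0 < z - v1" "0 < z - v2" "0 < z - v3"
    using assms by auto
  have sides: "v1 - (z - v2) = z - v3" "v2 - (z - v3) = z - v1" "v3 - (z - v1) = z - v2"
    using z by auto
  obtain r where "0 \<le> r" and masses: "PAB = r / (z - v2)" "PBC = r / (z - v3)" "PCA = r / (z - v1)"
    and sum_masses: "PAB + PBC + PCA = 1"
    using triangle_masses[OF gaps(1,2,3) K_def] unfolding PAB_def PBC_def PCA_def by metis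
  have "A \<noteq> B" "B \<noteq> C" "C \<noteq> A"
    using A(2) B(2) B(3) C(3) C(1) A(1) gaps sides by auto
  then show "\<forall>(c, a, b)\<in>set L. 0 \<le> c"
    using \<open>0 \<le> r\<close> gaps by (simp add: L_def masses)
  show "(\<Sum>(c, a, b)\<leftarrow>L. c * norm (b - a)) = 1"
    using \<open>A \<noteq> B\<close> \<open>B \<noteq> C\<close> \<open>C \<noteq> A\<close> sum_masses by (simp add: L_def)
  \<comment> \<open>On each item one side of the triangle spans \<open>[0, v\<^sub>j]\<close> and the other two split this
    range; the masses \<open>r / (z - v\<^sub>k)\<close> make the two pieces equally dense.\<close>
  have mixtures:
    "PCA * uniform_cdf 0 v1 c + PBC * uniform_cdf 0 (z - v2) c + PAB * uniform_cdf (z - v2) v1 c =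
      uniform_cdf 0 v1 c"
    "PAB * uniform_cdf 0 v2 c + PCA * uniform_cdf 0 (z - v3) c + PBC * uniform_cdf (z - v3) v2 c =
      uniform_cdf 0 v2 c"
    "PBC * uniform_cdf 0 v3 c + PAB * uniform_cdf 0 (z - v1) c + PCA * uniform_cdf (z - v1) v3 c =
      uniform_cdf 0 v3 c" for c
    by (rule uniform_cdf_split; use gaps sides sum_masses in \<open>simp add: masses sides; linarith\<close>)+
  have bounds: "0 < v1" "0 < v2" "0 < v3" "z - v2 < v1" "z - v3 < v2" "z - v1 < v3"
    using gaps sides by linarith+
  then have "(\<Sum>(d, a, b)\<leftarrow>L. d * norm (b - a) *
      uniform_cdf (min (a$j) (b$j)) (max (a$j) (b$j)) c) = uniform_cdf 0 (?w$j) c" for j c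
    using exhaust_3[of j] mixtures[of c] \<open>A \<noteq> B\<close> \<open>B \<noteq> C\<close> \<open>C \<noteq> A\<close> gaps
    by (elim disjE) (simp_all add: L_def A B C min_def max_def algebra_simps)
  then show "uniform_marginals ?w (seg_density_strategy L)"
    using \<open>0 \<le> r\<close> gaps bounds
    by (intro uniform_marginals_seg_density_strategy) (simp_all add: L_def masses forall_3 A B C)
  show "\<forall>(c, a, b)\<in>set L. a \<in> feasible z \<inter> {..?w} \<and> b \<in> feasible z \<inter> {..?w}"
    using gaps bounds by (simp add: L_def A B C feasible_def less_eq_vec_def forall_3 sum_3)
qed (use assms in \<open>auto simp: forall_3\<close>)

theorem theorem6:
  fixes v1 v2 v3 B1 B2 :: real
  assumes pos: "v3 > 0"
    and ord: "v1 \<ge> v2" "v2 \<ge> v3"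
    and bud1: "B1 \<ge> max ((v1 + v2 + v3) / 2) v1"
    and bud2: "B2 \<ge> max ((v1 + v2 + v3) / 2) v1"
  defines "z \<equiv> (v1 + v2 + v3) / 2"
    and "v \<equiv> vector [v1, v2, v3] :: bid"
  shows
    "(z > v1 \<longrightarrow>
      (let A = vector [v1, 0, z - v1] :: bid;
           B = vector [z - v2, v2, 0] :: bid;
           C = vector [0, z - v3, v3] :: bid;
           K = (z - v3) / (z - v2) + 1 + (z - v3) / (z - v1);
           PAB = (1 / K) * ((z - v3) / (z - v2));
           PBC = 1 / K;
           PCA = (1 / K) * ((z - v3) / (z - v1));
           f = seg_density_strategy
                 [(PAB / norm (B - A), A, B), (PBC / norm (C - B), B, C), (PCA / norm (A - C), C, A)]
       in nash_eq B1 B2 v v f f))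
     \<and>
     (z \<le> v1 \<longrightarrow>
      (let A = vector [v1, 0, 0] :: bid;
           B = vector [0, v2, v3] :: bid;
           f = seg_density_strategy [(1 / norm (B - A), A, B)]
       in nash_eq B1 B2 v v f f))"
proof -
  have z: "z = (v1 + v2 + v3) / 2"
    by (simp add: z_def)
  have budgets: "z \<le> B1" "z \<le> B2" "v1 \<le> B1" "v1 \<le> B2"
    using bud1 bud2 by (simp_all add: z)
  have triangle: "v2 < z" "v3 < z" if "v1 < z"
    using that ord by linarith+
  have segment: "v2 + v3 \<le> v1" if "z \<le> v1"
    using that z by (simp add: field_simps)
  show ?thesis
    unfolding Let_def v_def
    using pos ord budgets triangle segment
    by (intro conjI impI nash_eq_triangle_strategy[OF z] nash_eq_segment_strategy) auto
qed

end
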